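(* Let $\mathbb{Q}$ be a finite set of predicates from an SMT-decidable logic, $\Gamma$ a liquid typing environment and $e$ a liquid expression, both containing no imprecise refinement $?$. If $\mathrm{Infer}\ \Gamma\ e\ \mathbb{Q} = \mathrm{Just}\ \tau$, then $\mathrm{GInfer}\ \Gamma\ e\ \mathbb{Q} = \{\tau\}$. Otherwise $\mathrm{GInfer}\ \Gamma\ e\ \mathbb{Q} = \emptyset$.
   Context: Language: base types $b ::= \mathrm{Int}\mid\mathrm{Bool}$; expressions built from constants (with given sound types $\mathrm{ty}(c)$), variables, $\lambda x{:}t.e$, applications $e\,x$, $\mathrm{if}\ x\ \mathrm{then}\ e\ \mathrm{else}\ e$, $\mathrm{let}\ x=e\ \mathrm{in}\ e$ and annotated $\mathrm{let}\ x{:}\tau=e\ \mathrm{in}\ e$; refinement types $\{v{:}b\mid p\}$ and $x{:}\tau\to\tau$, checked by a standard refinement type system whose base subtyping $\Gamma\vdash\{v{:}b\mid p_1\}\preceq\{v{:}b\mid p_2\}$ is valid iff $\bigwedge\{p\mid y{:}\{v{:}b\mid p\}\in\Gamma\}\Rightarrow p_1\Rightarrow p_2$ is SMT-valid and base well-formedness requires $p$ to be a boolean in $\Gamma,v{:}b$. Liquid predicates: $\ell ::= \mathrm{true}\mid q\mid\ell\land\ell\mid\kappa$, $q\in\mathbb{Q}$, $\kappa$ liquid variables; a solution $A$ maps liquid variables to subsets of $\mathbb{Q}$. Gradual predicates are $\ell$ or $\ell\land ?$ with $\ell$ local (for every closing substitution some value satisfies it). Algorithmic concretization $\gamma_{\mathbb{Q}}(\ell)=\{\ell\}$,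 $\gamma_{\mathbb{Q}}(\ell\land ?)=\{\ell'$ conjunction of a subset of $\mathbb{Q}$ $\mid \ell'$ implies $\ell$ for all substitutions, $\ell'$ local$\}$, extended pointwise to constraints and lists of constraints. $\mathrm{Cons}\ \Gamma\ e$ applies the typing rules syntax-directedly, using fresh liquid-variable templates (Hindley–Milner shaped) for types not given by syntax, returning $(\mathrm{Just}\ \tau, C)$ with $C$ the list of base subtyping/well-formedness constraints, or $(\mathrm{Nothing},\emptyset)$ on failure. $\mathrm{Solve}\ A\ C$ repeatedly picks a constraint not valid under $A$ and, if its right-hand side is a liquid variable $\kappa$, removes from $A(\kappa)$ the qualifiers failing it, otherwise returns $\mathrm{Nothing}$; it returns $\mathrm{Just}\ A$ when all constraints are valid. With $A_0=\lambda\kappa.\mathbb{Q}$: $\mathrm{Infer}\ \Gamma\ e\ \mathbb{Q}$ returns $\mathrm{Just}\ \tau[A]$ if $\mathrm{Cons}\ \Gamma\ e=(\mathrm{Just}\ \tau,C)$ and $\mathrm{Solve}\ A_0\ C=\mathrm{Just}\ A$, and $\mathrm{Nothing}$ otherwise; $\mathrm{GInfer}\ \Gamma\ e\ \mathbb{Q}=\{\tau[A]\mid(\mathrm{Just}\ \tau,C)=\mathrm{Cons}\ \Gamma\ e,\ C'\in\gamma_{\mathbb{Q}}(C),\ \mathrm{Just}\ A=\mathrm{Solve}\ A_0\ C'\}$. *)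

theory Defs
  imports Main
begin

datatype base = TInt | TBool

text \<open>Program variables: Src n are source-level names, Gen n are names reserved
 for binders of freshly generated function templates.\<close>
datatype var = Src nat | Gen nat

text \<open>Logical variables of refinement predicates: the value variable v and program variables.\<close>
datatype lvar = VV | PV var

datatype val = IntV int | BoolV bool

fun has_ty :: "val \<Rightarrow> base \<Rightarrow> bool" where
  "has_ty (IntV _) b = (b = TInt)"
| "has_ty (BoolV _) b = (b = TBool)"

text \<open>Formulas of the underlying (SMT-decidable) logic, modelled semantically as
 boolean-valued functions of a valuation of the logical variables.  Qualifiers are formulas.\<close>
type_synonym formula = "(lvar \<Rightarrow> val) \<Rightarrow> bool"

text \<open>Refinement predicates: true, formulas (in particular qualifiers q), conjunction,
 liquid variables kappa (with a pending variable renaming), and the gradual form  l \<and> ?.\<close>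
datatype pred =
    PTrue
  | PAtom formula
  | PAnd pred pred
  | PKappa nat "lvar \<Rightarrow> lvar"
  | PAndUnk pred

datatype rtype = RBase base pred | RFun var rtype rtype

text \<open>Hindley-Milner shapes (unrefined types), used in lambda annotations.\<close>
datatype shape = SBase base | SFun shape shape

datatype 'c expr =
    EConst 'c
  | EVar var
  | ELam var shape "'c expr"
  | EApp "'c expr" var
  | EIf var "'c expr" "'c expr"
  | ELet var "'c expr" "'c expr"
  | ELetA var rtype "'c expr" "'c expr"

text \<open>Environment entries: variable bindings and branch guards (path conditions).\<close>
datatype entry = EBind var rtype | EGuard formula
type_synonym env = "entry list"

text \<open>Base constraints: Sub G b p1 p2 is  G |- {v:b|p1} <= {v:b|p2};
 WF G b p is base well-formedness of {v:b|p} in G.\<close>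
datatype constr = Sub env base pred pred | WF env base pred

section \<open>Absence of the imprecise refinement ?\<close>

fun static_pred :: "pred \<Rightarrow> bool" where
  "static_pred (PAndUnk _) = False"
| "static_pred (PAnd p q) = (static_pred p \<and> static_pred q)"
| "static_pred _ = True"

fun static_rtype :: "rtype \<Rightarrow> bool" where
  "static_rtype (RBase b p) = static_pred p"
| "static_rtype (RFun x t1 t2) = (static_rtype t1 \<and> static_rtype t2)"

fun static_entry :: "entry \<Rightarrow> bool" where
  "static_entry (EBind x t) = static_rtype t"
| "static_entry (EGuard f) = True"

definition static_env :: "env \<Rightarrow> bool" where
  "static_env G = (\<forall>en\<in>set G. static_entry en)"

fun static_expr :: "'c expr \<Rightarrow> bool" where
  "static_expr (EConst c) = True"
| "static_expr (EVar x) = True"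
| "static_expr (ELam x s e) = static_expr e"
| "static_expr (EApp e x) = static_expr e"
| "static_expr (EIf x e1 e2) = (static_expr e1 \<and> static_expr e2)"
| "static_expr (ELet x e1 e2) = (static_expr e1 \<and> static_expr e2)"
| "static_expr (ELetA x t e1 e2) = (static_rtype t \<and> static_expr e1 \<and> static_expr e2)"

fun subst_pred :: "(lvar \<Rightarrow> lvar) \<Rightarrow> pred \<Rightarrow> pred" where
  "subst_pred \<theta> PTrue = PTrue"
| "subst_pred \<theta> (PAtom f) = PAtom (\<lambda>\<sigma>. f (\<sigma> \<circ> \<theta>))"
| "subst_pred \<theta> (PAnd p q) = PAnd (subst_pred \<theta> p) (subst_pred \<theta> q)"
| "subst_pred \<theta> (PKappa k \<theta>') = PKappa k (\<theta> \<circ> \<theta>')"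
| "subst_pred \<theta> (PAndUnk p) = PAndUnk (subst_pred \<theta> p)"

fun subst_rtype :: "(lvar \<Rightarrow> lvar) \<Rightarrow> rtype \<Rightarrow> rtype" where
  "subst_rtype \<theta> (RBase b p) = RBase b (subst_pred \<theta> p)"
| "subst_rtype \<theta> (RFun z t1 t2) =
     RFun z (subst_rtype \<theta> t1) (subst_rtype (\<theta>(PV z := PV z)) t2)"

text \<open>A solution maps liquid variables to sets of qualifiers.\<close>
type_synonym solution = "nat \<Rightarrow> formula set"

definition conj_formula :: "formula set \<Rightarrow> (lvar \<Rightarrow> lvar) \<Rightarrow> formula" where
  "conj_formula S \<theta> = (\<lambda>\<sigma>. \<forall>q\<in>S. q (\<sigma> \<circ> \<theta>))"

fun apply_pred :: "solution \<Rightarrow> pred \<Rightarrow> pred" where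
  "apply_pred A (PKappa k \<theta>) = PAtom (conj_formula (A k) \<theta>)"
| "apply_pred A (PAnd p q) = PAnd (apply_pred A p) (apply_pred A q)"
| "apply_pred A (PAndUnk p) = PAndUnk (apply_pred A p)"
| "apply_pred A p = p"

fun apply_rtype :: "solution \<Rightarrow> rtype \<Rightarrow> rtype" where
  "apply_rtype A (RBase b p) = RBase b (apply_pred A p)"
| "apply_rtype A (RFun x t1 t2) = RFun x (apply_rtype A t1) (apply_rtype A t2)"

text \<open>Meaning of a predicate under a solution (the ? of a gradual predicate is ignored;
 concretization removes it before solving).\<close>
fun sem :: "solution \<Rightarrow> pred \<Rightarrow> formula" where
  "sem A PTrue \<sigma> = True"
| "sem A (PAtom f) \<sigma> = f \<sigma>"
| "sem A (PAnd p q) \<sigma> = (sem A p \<sigma> \<and> sem A q \<sigma>)"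
| "sem A (PKappa k \<theta>) \<sigma> = conj_formula (A k) \<theta> \<sigma>"
| "sem A (PAndUnk p) \<sigma> = sem A p \<sigma>"

definition env_sem :: "solution \<Rightarrow> env \<Rightarrow> formula" where
  "env_sem A G \<sigma> =
     ((\<forall>y b p. EBind y (RBase b p) \<in> set G \<longrightarrow> sem A (subst_pred (id(VV := PV y)) p) \<sigma>)
      \<and> (\<forall>f. EGuard f \<in> set G \<longrightarrow> f \<sigma>))"

definition env_typed :: "env \<Rightarrow> base \<Rightarrow> (lvar \<Rightarrow> val) \<Rightarrow> bool" where
  "env_typed G b \<sigma> =
     (has_ty (\<sigma> VV) b \<and> (\<forall>y b' p. EBind y (RBase b' p) \<in> set G \<longrightarrow> has_ty (\<sigma> (PV y)) b'))"

definition scope :: "env \<Rightarrow> lvar set" where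
  "scope G = insert VV {PV y | y b p. EBind y (RBase b p) \<in> set G}"

fun valid :: "solution \<Rightarrow> constr \<Rightarrow> bool" where
  "valid A (Sub G b p1 p2) =
     (\<forall>\<sigma>. env_typed G b \<sigma> \<longrightarrow> env_sem A G \<sigma> \<longrightarrow> sem A p1 \<sigma> \<longrightarrow> sem A p2 \<sigma>)"
| "valid A (WF G b p) =
     (\<forall>\<sigma> \<sigma>'. env_typed G b \<sigma> \<longrightarrow> env_typed G b \<sigma>' \<longrightarrow> (\<forall>z\<in>scope G. \<sigma> z = \<sigma>' z)
        \<longrightarrow> sem A p \<sigma> = sem A p \<sigma>')"

fun refine :: "solution \<Rightarrow> constr \<Rightarrow> solution option" where
  "refine A (Sub G b p1 (PKappa k \<theta>)) =
     Some (A(k := {q \<in> A k. valid A (Sub G b p1 (PAtom (\<lambda>\<sigma>. q (\<sigma> \<circ> \<theta>))))}))"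
| "refine A (WF G b (PKappa k \<theta>)) =
     Some (A(k := {q \<in> A k. valid A (WF G b (PAtom (\<lambda>\<sigma>. q (\<sigma> \<circ> \<theta>))))}))"
| "refine A c = None"

partial_function (tailrec) solve :: "solution \<Rightarrow> constr list \<Rightarrow> solution option" where
  "solve A C =
     (case find (\<lambda>c. \<not> valid A c) C of
        None \<Rightarrow> Some A
      | Some c \<Rightarrow> (case refine A c of None \<Rightarrow> None | Some A' \<Rightarrow> solve A' C))"

fun lookup :: "env \<Rightarrow> var \<Rightarrow> rtype option" where
  "lookup [] x = None"
| "lookup (EBind y t # G) x = (if x = y then Some t else lookup G x)"
| "lookup (EGuard f # G) x = lookup G x"

text \<open>Decomposition of subtyping  G |- t[th1] <= t'[th2]  into base constraints.\<close>
function sub :: "env \<Rightarrow> (lvar \<Rightarrow> lvar) \<Rightarrow> (lvar \<Rightarrow> lvar) \<Rightarrow> rtype \<Rightarrow> rtype \<Rightarrow> constr list option" where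
  "sub G \<theta>1 \<theta>2 (RBase b p) (RBase b' p') =
     (if b = b' then Some [Sub G b (subst_pred \<theta>1 p) (subst_pred \<theta>2 p')] else None)"
| "sub G \<theta>1 \<theta>2 (RFun x t1 t2) (RFun y t1' t2') =
     (case sub G \<theta>2 \<theta>1 t1' t1 of
        None \<Rightarrow> None
      | Some C1 \<Rightarrow>
         (case sub (EBind y (subst_rtype \<theta>2 t1') # G) (\<theta>1(PV x := PV y)) (\<theta>2(PV y := PV y)) t2 t2' of
            None \<Rightarrow> None
          | Some C2 \<Rightarrow> Some (C1 @ C2)))"
| "sub G \<theta>1 \<theta>2 (RBase b p) (RFun y t1' t2') = None"
| "sub G \<theta>1 \<theta>2 (RFun x t1 t2) (RBase b' p') = None"
  by pat_completeness auto
termination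
  by (relation "measure (\<lambda>(G, a, b, t, t'). size t + size t')") auto

definition subty :: "env \<Rightarrow> rtype \<Rightarrow> rtype \<Rightarrow> constr list option" where
  "subty G t t' = sub G id id t t'"

fun wf :: "env \<Rightarrow> rtype \<Rightarrow> constr list" where
  "wf G (RBase b p) = [WF G b p]"
| "wf G (RFun x t1 t2) = wf G t1 @ wf (EBind x t1 # G) t2"

text \<open>Fresh templates (counter n supplies fresh liquid variables and binder names).\<close>
fun fresh_shape :: "shape \<Rightarrow> nat \<Rightarrow> rtype \<times> nat" where
  "fresh_shape (SBase b) n = (RBase b (PKappa n id), Suc n)"
| "fresh_shape (SFun s1 s2) n =
     (let (t1, n1) = fresh_shape s1 (Suc n); (t2, n2) = fresh_shape s2 n1
      in (RFun (Gen n) t1 t2, n2))"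

fun fresh_like :: "rtype \<Rightarrow> nat \<Rightarrow> rtype \<times> nat" where
  "fresh_like (RBase b p) n = (RBase b (PKappa n id), Suc n)"
| "fresh_like (RFun x t1 t2) n =
     (let (t1', n1) = fresh_like t1 n; (t2', n2) = fresh_like t2 n1
      in (RFun x t1' t2', n2))"

fun cons :: "('c \<Rightarrow> rtype) \<Rightarrow> env \<Rightarrow> 'c expr \<Rightarrow> nat \<Rightarrow> (rtype \<times> constr list \<times> nat) option" where
  "cons ty G (EConst c) n = Some (ty c, [], n)"
| "cons ty G (EVar x) n =
     (case lookup G x of
        None \<Rightarrow> None
      | Some (RBase b p) \<Rightarrow> Some (RBase b (PAtom (\<lambda>\<sigma>. \<sigma> VV = \<sigma> (PV x))), [], n)
      | Some t \<Rightarrow> Some (t, [], n))"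
| "cons ty G (ELam x s e) n =
     (let (tx, n1) = fresh_shape s n in
      case cons ty (EBind x tx # G) e n1 of
        None \<Rightarrow> None
      | Some (te, C, n2) \<Rightarrow>
         (let (t', n3) = fresh_like te n2 in
          case subty (EBind x tx # G) te t' of
            None \<Rightarrow> None
          | Some C' \<Rightarrow> Some (RFun x tx t', C @ wf G (RFun x tx t') @ C', n3)))"
| "cons ty G (EApp e x) n =
     (case cons ty G e n of
        Some (RFun y t1 t2, C, n1) \<Rightarrow>
          (case lookup G x of
             None \<Rightarrow> None
           | Some tx \<Rightarrow>
              (case subty G tx t1 of
                 None \<Rightarrow> None
               | Some C' \<Rightarrow> Some (subst_rtype (id(PV y := PV x)) t2, C @ C', n1)))
      | _ \<Rightarrow> None)"
| "cons ty G (EIf x e1 e2) n =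
     (case lookup G x of
        Some (RBase TBool p) \<Rightarrow>
          (let G1 = EGuard (\<lambda>\<sigma>. \<sigma> (PV x) = BoolV True) # G;
               G2 = EGuard (\<lambda>\<sigma>. \<sigma> (PV x) = BoolV False) # G in
           case cons ty G1 e1 n of
             None \<Rightarrow> None
           | Some (t1, C1, n1) \<Rightarrow>
              (case cons ty G2 e2 n1 of
                 None \<Rightarrow> None
               | Some (t2, C2, n2) \<Rightarrow>
                  (let (t, n3) = fresh_like t1 n2 in
                   case (subty G1 t1 t, subty G2 t2 t) of
                     (Some S1, Some S2) \<Rightarrow> Some (t, C1 @ C2 @ wf G t @ S1 @ S2, n3)
                   | _ \<Rightarrow> None)))
      | _ \<Rightarrow> None)"
| "cons ty G (ELet x e1 e2) n =
     (case cons ty G e1 n of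
        None \<Rightarrow> None
      | Some (t1, C1, n1) \<Rightarrow>
         (case cons ty (EBind x t1 # G) e2 n1 of
            None \<Rightarrow> None
          | Some (t2, C2, n2) \<Rightarrow>
             (let (t, n3) = fresh_like t2 n2 in
              case subty (EBind x t1 # G) t2 t of
                None \<Rightarrow> None
              | Some S \<Rightarrow> Some (t, C1 @ C2 @ wf G t @ S, n3))))"
| "cons ty G (ELetA x tau e1 e2) n =
     (case cons ty G e1 n of
        None \<Rightarrow> None
      | Some (t1, C1, n1) \<Rightarrow>
         (case subty G t1 tau of
            None \<Rightarrow> None
          | Some S1 \<Rightarrow>
             (case cons ty (EBind x tau # G) e2 n1 of
                None \<Rightarrow> None
              | Some (t2, C2, n2) \<Rightarrow>
                 (let (t, n3) = fresh_like t2 n2 in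
                  case subty (EBind x tau # G) t2 t of
                    None \<Rightarrow> None
                  | Some S \<Rightarrow> Some (t, C1 @ S1 @ wf G tau @ C2 @ wf G t @ S, n3)))))"

text \<open>Bounds on the liquid variables already occurring, so that generated ones are fresh.\<close>
fun kb_pred :: "pred \<Rightarrow> nat" where
  "kb_pred (PKappa k _) = Suc k"
| "kb_pred (PAnd p q) = max (kb_pred p) (kb_pred q)"
| "kb_pred (PAndUnk p) = kb_pred p"
| "kb_pred _ = 0"

fun kb_rtype :: "rtype \<Rightarrow> nat" where
  "kb_rtype (RBase b p) = kb_pred p"
| "kb_rtype (RFun x t1 t2) = max (kb_rtype t1) (kb_rtype t2)"

fun kb_env :: "env \<Rightarrow> nat" where
  "kb_env [] = 0"
| "kb_env (EBind x t # G) = max (kb_rtype t) (kb_env G)"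
| "kb_env (EGuard f # G) = kb_env G"

fun kb_expr :: "'c expr \<Rightarrow> nat" where
  "kb_expr (ELam x s e) = kb_expr e"
| "kb_expr (EApp e x) = kb_expr e"
| "kb_expr (EIf x e1 e2) = max (kb_expr e1) (kb_expr e2)"
| "kb_expr (ELet x e1 e2) = max (kb_expr e1) (kb_expr e2)"
| "kb_expr (ELetA x t e1 e2) = max (kb_rtype t) (max (kb_expr e1) (kb_expr e2))"
| "kb_expr _ = 0"

definition Cons :: "('c \<Rightarrow> rtype) \<Rightarrow> env \<Rightarrow> 'c expr \<Rightarrow> rtype option \<times> constr list" where
  "Cons ty G e =
     (case cons ty G e (max (kb_env G) (kb_expr e)) of
        None \<Rightarrow> (None, [])
      | Some (t, C, _) \<Rightarrow> (Some t, C))"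

definition Infer :: "('c \<Rightarrow> rtype) \<Rightarrow> env \<Rightarrow> 'c expr \<Rightarrow> formula set \<Rightarrow> rtype option" where
  "Infer ty G e Q =
     (case Cons ty G e of
        (Some t, C) \<Rightarrow> (case solve (\<lambda>k. Q) C of Some A \<Rightarrow> Some (apply_rtype A t) | None \<Rightarrow> None)
      | (None, C) \<Rightarrow> None)"

section \<open>Algorithmic concretization and GInfer\<close>

definition local_formula :: "base \<Rightarrow> formula \<Rightarrow> bool" where
  "local_formula b f = (\<forall>\<sigma>. \<exists>w. has_ty w b \<and> f (\<sigma>(VV := w)))"

fun gamma_pred :: "formula set \<Rightarrow> base \<Rightarrow> pred \<Rightarrow> pred set" where
  "gamma_pred Q b (PAndUnk l) =
     {PAtom (conj_formula S id) | S. S \<subseteq> Q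
        \<and> (\<forall>\<sigma>. conj_formula S id \<sigma> \<longrightarrow> sem (\<lambda>k. {}) l \<sigma>)
        \<and> local_formula b (conj_formula S id)}"
| "gamma_pred Q b p = {p}"

fun gamma_rtype :: "formula set \<Rightarrow> rtype \<Rightarrow> rtype set" where
  "gamma_rtype Q (RBase b p) = {RBase b p' | p'. p' \<in> gamma_pred Q b p}"
| "gamma_rtype Q (RFun x t1 t2) =
     {RFun x t1' t2' | t1' t2'. t1' \<in> gamma_rtype Q t1 \<and> t2' \<in> gamma_rtype Q t2}"

fun gamma_env :: "formula set \<Rightarrow> env \<Rightarrow> env set" where
  "gamma_env Q [] = {[]}"
| "gamma_env Q (EBind x t # G) = {EBind x t' # G' | t' G'. t' \<in> gamma_rtype Q t \<and> G' \<in> gamma_env Q G}"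
| "gamma_env Q (EGuard f # G) = {EGuard f # G' | G'. G' \<in> gamma_env Q G}"

fun gamma_constr :: "formula set \<Rightarrow> constr \<Rightarrow> constr set" where
  "gamma_constr Q (Sub G b p1 p2) =
     {Sub G' b p1' p2' | G' p1' p2'. G' \<in> gamma_env Q G \<and> p1' \<in> gamma_pred Q b p1 \<and> p2' \<in> gamma_pred Q b p2}"
| "gamma_constr Q (WF G b p) =
     {WF G' b p' | G' p'. G' \<in> gamma_env Q G \<and> p' \<in> gamma_pred Q b p}"

fun gamma_constrs :: "formula set \<Rightarrow> constr list \<Rightarrow> constr list set" where
  "gamma_constrs Q [] = {[]}"
| "gamma_constrs Q (c # C) = {c' # C' | c' C'. c' \<in> gamma_constr Q c \<and> C' \<in> gamma_constrs Q C}"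

definition GInfer :: "('c \<Rightarrow> rtype) \<Rightarrow> env \<Rightarrow> 'c expr \<Rightarrow> formula set \<Rightarrow> rtype set" where
  "GInfer ty G e Q =
     {apply_rtype A t | t C C' A. Cons ty G e = (Some t, C) \<and> C' \<in> gamma_constrs Q C
                                 \<and> solve (\<lambda>k. Q) C' = Some A}"

end

theory Submission
  imports Defs
begin

text \<open>If ? occurs neither in \<open>\<Gamma>\<close>, nor in \<open>e\<close>, nor in the types of the constants, then
  every template built by Cons and every constraint it emits is free of ?.  The algorithmic
  concretization of such a constraint list is the singleton of the list itself, so GInfer
  runs Solve on exactly the constraints Infer runs it on.\<close>

fun static_constr :: "constr \<Rightarrow> bool" where
  "static_constr (Sub G b p1 p2) = (static_env G \<and> static_pred p1 \<and> static_pred p2)"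
| "static_constr (WF G b p) = (static_env G \<and> static_pred p)"

lemma static_env_Cons [simp]: "static_env (en # G) \<longleftrightarrow> static_entry en \<and> static_env G"
  by (simp add: static_env_def)

lemma static_subst_pred: "static_pred p \<Longrightarrow> static_pred (subst_pred \<theta> p)"
  by (induction \<theta> p rule: subst_pred.induct) auto

lemma static_subst_rtype: "static_rtype t \<Longrightarrow> static_rtype (subst_rtype \<theta> t)"
  by (induction \<theta> t rule: subst_rtype.induct) (auto simp: static_subst_pred)

lemma static_fresh_shape: "fresh_shape s n = (t, m) \<Longrightarrow> static_rtype t"
  by (induction s n arbitrary: t m rule: fresh_shape.induct) (auto split: prod.splits)

lemma static_fresh_like: "fresh_like t0 n = (t, m) \<Longrightarrow> static_rtype t"
  by (induction t0 n arbitrary: t m rule: fresh_like.induct) (auto split: prod.splits)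

lemma static_lookup: "\<lbrakk>lookup G x = Some t; static_env G\<rbrakk> \<Longrightarrow> static_rtype t"
  by (induction G x rule: lookup.induct) (auto split: if_splits)

lemma static_sub:
  "\<lbrakk>sub G \<theta>1 \<theta>2 t t' = Some C; static_env G; static_rtype t; static_rtype t'\<rbrakk>
   \<Longrightarrow> list_all static_constr C"
  by (induction G \<theta>1 \<theta>2 t t' arbitrary: C rule: sub.induct)
     (auto split: if_splits option.splits simp: static_subst_pred static_subst_rtype)

lemma static_subty:
  "\<lbrakk>subty G t t' = Some C; static_env G; static_rtype t; static_rtype t'\<rbrakk>
   \<Longrightarrow> list_all static_constr C"
  unfolding subty_def by (rule static_sub)

lemma static_wf: "\<lbrakk>static_env G; static_rtype t\<rbrakk> \<Longrightarrow> list_all static_constr (wf G t)"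
  by (induction G t rule: wf.induct) auto

lemma static_cons:
  "\<lbrakk>cons ty G e n = Some (t, C, n'); \<forall>c. static_rtype (ty c); static_env G; static_expr e\<rbrakk>
   \<Longrightarrow> static_rtype t \<and> list_all static_constr C"
proof (induction ty G e n arbitrary: t C n' rule: cons.induct)
  case (1 ty G c n)
  then show ?case by auto
next
  case (2 ty G x n)
  then show ?case by (auto split: option.splits rtype.splits dest: static_lookup)
next
  case (3 ty G x s e n)
  then show ?case
    by (auto split: prod.splits option.splits dest!: static_fresh_shape static_fresh_like
        simp: static_subty static_wf)
next
  case (4 ty G e x n)
  from "4.prems"(1) obtain y t1 t2 C0 n1 tx C' where
    head: "cons ty G e n = Some (RFun y t1 t2, C0, n1)" and
    arg: "lookup G x = Some tx" "subty G tx t1 = Some C'" and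
    res: "t = subst_rtype (id(PV y := PV x)) t2" "C = C0 @ C'"
    by (auto split: option.splits rtype.splits)
  from "4.IH"[OF head] "4.prems"(2-4) have "static_rtype (RFun y t1 t2)" "list_all static_constr C0"
    by simp_all
  with arg res "4.prems"(3) show ?case
    by (auto simp: static_subst_rtype static_subty static_lookup)
next
  case (5 ty G x e1 e2 n)
  define G1 where "G1 = EGuard (\<lambda>\<sigma>. \<sigma> (PV x) = BoolV True) # G"
  define G2 where "G2 = EGuard (\<lambda>\<sigma>. \<sigma> (PV x) = BoolV False) # G"
  from "5.prems"(1) obtain p t1 C1 n1 t2 C2 n2 n3 S1 S2 where
    guard: "lookup G x = Some (RBase TBool p)" and
    branches: "cons ty G1 e1 n = Some (t1, C1, n1)" "cons ty G2 e2 n1 = Some (t2, C2, n2)" and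
    join: "fresh_like t1 n2 = (t, n3)" "subty G1 t1 t = Some S1" "subty G2 t2 t = Some S2" and
    res: "C = C1 @ C2 @ wf G t @ S1 @ S2"
    by (auto simp: G1_def G2_def Let_def split: option.splits rtype.splits base.splits prod.splits)
  have envs: "static_env G1" "static_env G2"
    using "5.prems"(3) by (simp_all add: G1_def G2_def)
  have "static_rtype t1" "list_all static_constr C1"
    using "5.IH"(1)[OF guard refl refl G1_def G2_def branches(1)] "5.prems"(2,4) envs by simp_all
  moreover have "static_rtype t2" "list_all static_constr C2"
    using "5.IH"(2)[OF guard refl refl G1_def G2_def branches(1) refl refl branches(2)]
      "5.prems"(2,4) envs by simp_all
  moreover have "static_rtype t"
    using join(1) by (rule static_fresh_like)
  ultimately show ?case
    using join(2,3) res envs "5.prems"(3) by (simp add: static_subty static_wf)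
next
  case (6 ty G x e1 e2 n)
  from "6.prems"(1) obtain t1 C1 n1 t2 C2 n2 n3 S where
    bound: "cons ty G e1 n = Some (t1, C1, n1)" and
    body: "cons ty (EBind x t1 # G) e2 n1 = Some (t2, C2, n2)" and
    join: "fresh_like t2 n2 = (t, n3)" "subty (EBind x t1 # G) t2 t = Some S" and
    res: "C = C1 @ C2 @ wf G t @ S"
    by (auto split: option.splits prod.splits)
  have "static_rtype t1" "list_all static_constr C1"
    using "6.IH"(1)[OF bound] "6.prems"(2-4) by simp_all
  moreover from this have "static_rtype t2" "list_all static_constr C2"
    using "6.IH"(2)[OF bound refl refl body] "6.prems"(2-4) by simp_all
  moreover have "static_rtype t"
    using join(1) by (rule static_fresh_like)
  ultimately show ?case
    using join(2) res "6.prems"(3) by (simp add: static_subty static_wf)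
next
  case (7 ty G x tau e1 e2 n)
  from "7.prems"(1) obtain t1 C1 n1 S1 t2 C2 n2 n3 S where
    bound: "cons ty G e1 n = Some (t1, C1, n1)" "subty G t1 tau = Some S1" and
    body: "cons ty (EBind x tau # G) e2 n1 = Some (t2, C2, n2)" and
    join: "fresh_like t2 n2 = (t, n3)" "subty (EBind x tau # G) t2 t = Some S" and
    res: "C = C1 @ S1 @ wf G tau @ C2 @ wf G t @ S"
    by (auto split: option.splits prod.splits)
  have "static_rtype tau"
    using "7.prems"(4) by simp
  moreover have "static_rtype t1" "list_all static_constr C1"
    using "7.IH"(1)[OF bound(1)] "7.prems"(2-4) by simp_all
  moreover from calculation have "static_rtype t2" "list_all static_constr C2"
    using "7.IH"(2)[OF bound(1) refl refl bound(2) body] "7.prems"(2-4) by simp_all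
  moreover have "static_rtype t"
    using join(1) by (rule static_fresh_like)
  ultimately show ?case
    using bound(2) join(2) res "7.prems"(3) by (simp add: static_subty static_wf)
qed

lemma static_Cons:
  "\<lbrakk>Cons ty G e = (Some t, C); \<forall>c. static_rtype (ty c); static_env G; static_expr e\<rbrakk>
   \<Longrightarrow> list_all static_constr C"
  by (auto simp: Cons_def split: option.splits dest: static_cons)

lemma gamma_pred_static: "static_pred p \<Longrightarrow> gamma_pred Q b p = {p}"
  by (cases p) auto

lemma gamma_rtype_static: "static_rtype t \<Longrightarrow> gamma_rtype Q t = {t}"
  by (induction t) (auto simp: gamma_pred_static)

lemma gamma_env_static: "static_env G \<Longrightarrow> gamma_env Q G = {G}"
proof (induction G)
  case Nil
  then show ?case by simp
next
  case (Cons en G)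
  then show ?case by (cases en) (auto simp: gamma_rtype_static)
qed

lemma gamma_constr_static: "static_constr c \<Longrightarrow> gamma_constr Q c = {c}"
  by (cases c) (auto simp: gamma_pred_static gamma_env_static)

lemma gamma_constrs_static: "list_all static_constr C \<Longrightarrow> gamma_constrs Q C = {C}"
  by (induction C) (auto simp: gamma_constr_static)

lemma GInfer_eq_Infer_if_gamma_constrs_singleton:
  assumes "\<And>t C. Cons ty G e = (Some t, C) \<Longrightarrow> gamma_constrs Q C = {C}"
  shows "GInfer ty G e Q = set_option (Infer ty G e Q)"
proof (cases "Cons ty G e")
  case (Pair t C)
  show ?thesis
  proof (cases t)
    case None
    with Pair show ?thesis by (simp add: GInfer_def Infer_def)
  next
    case (Some t')
    with Pair assms have "GInfer ty G e Q = {apply_rtype A t' | A. solve (\<lambda>k. Q) C = Some A}"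
      by (auto simp: GInfer_def)
    with Pair Some show ?thesis
      by (cases "solve (\<lambda>k. Q) C") (auto simp: Infer_def)
  qed
qed

theorem mainTheorem2:
  fixes ty :: "'c \<Rightarrow> rtype" and G :: env and e :: "'c expr" and Q :: "formula set"
  assumes "finite Q"
    and "\<forall>c. static_rtype (ty c)"
    and "static_env G"
    and "static_expr e"
  shows "(case Infer ty G e Q of
            Some \<tau> \<Rightarrow> GInfer ty G e Q = {\<tau>}
          | None \<Rightarrow> GInfer ty G e Q = {})"
proof -
  have "GInfer ty G e Q = set_option (Infer ty G e Q)"
    using assms(2-4) by (intro GInfer_eq_Infer_if_gamma_constrs_singleton gamma_constrs_static static_Cons)
  then show ?thesis
    by (cases "Infer ty G e Q") simp_all
qed

end
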